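(* Let $q$ be a prime power, $h\ge 2$ and $v$ integers, and let $\mathcal{S}'$ be a spanning projective $2h$-cylinder in $\mathrm{PG}(v-1,q)$. Let $\mathcal{S}$ be the set of points of $\mathrm{PG}(v-1,q^h)$ obtained by taking, for each point $\langle x\rangle_{\mathbb{F}_q}\in\mathcal{S}'$ (with $x\in\mathbb{F}_q^v\subseteq\mathbb{F}_{q^h}^v$), the point $\langle x\rangle_{\mathbb{F}_{q^h}}$. Then $\mathcal{S}$ is a spanning set of $(q^h)^2$ points in $\mathrm{PG}(v-1,q^h)$ which is $q^h$-divisible but is not a $2$-cylinder (over $\mathbb{F}_{q^h}$).
   Context: For a prime power $Q$, $\mathrm{PG}(v-1,Q)$ is the projective space of $\mathbb{F}_Q^v$; a $k$-space is a $k$-dimensional subspace (points are $1$-spaces, hyperplanes $(v-1)$-spaces). A set $\mathcal{S}$ of points is spanning if its points span $\mathbb{F}_Q^v$, and it is $Q^r$-divisible if $|\mathcal{S}\cap H|\equiv|\mathcal{S}|\pmod{Q^r}$ for every hyperplane $H$. Over $\mathbb{F}_Q$, an $(r+1)$-cylinder is a multiset of $Q^{r+1}$ points which arises as the union (counted with multiplicity) of the point sets $L_1\setminus F,\dots,L_Q\setminus F$, where $L_1,\dots,L_Q$ are $(r+1)$-spaces and $F$ is an $r$-space contained in every $L_i$ ($L_i\setminus F$ denotes the set of points of $L_i$ not in $F$); it is projective if this multiset is a set, and spanning if its points span $\mathbb{F}_Q^v$. Here $\mathbb{F}_q$ is viewed as a subfield of $\mathbb{F}_{q^h}$. *)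

theory Defs
  imports Main "HOL-Library.Multiset" "HOL-Computational_Algebra.Primes"
begin

text \<open>Vectors of F^v are functions from a finite index type 'n (with CARD('n) = v)
 to a finite field 'a. A subfield K of 'a plays the role of F_q; K = UNIV is F_{q^h}.
 Points of PG(v-1,K) are 1-dimensional K-subspaces of K^v.\<close>

definition subfield :: "'a::field set \<Rightarrow> bool" where
  "subfield K \<longleftrightarrow> 0 \<in> K \<and> 1 \<in> K \<and> (\<forall>a\<in>K. \<forall>b\<in>K. a + b \<in> K \<and> a * b \<in> K)
     \<and> (\<forall>a\<in>K. - a \<in> K) \<and> (\<forall>a\<in>K. a \<noteq> 0 \<longrightarrow> inverse a \<in> K)"

definition Kvec :: "'a::field set \<Rightarrow> ('n \<Rightarrow> 'a) set" where
  "Kvec K = {x. \<forall>i. x i \<in> K}"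

definition ksubspace :: "'a::field set \<Rightarrow> ('n \<Rightarrow> 'a) set \<Rightarrow> bool" where
  "ksubspace K U \<longleftrightarrow> U \<subseteq> Kvec K \<and> (\<lambda>i. 0) \<in> U
     \<and> (\<forall>x\<in>U. \<forall>y\<in>U. (\<lambda>i. x i + y i) \<in> U) \<and> (\<forall>c\<in>K. \<forall>x\<in>U. (\<lambda>i. c * x i) \<in> U)"

definition kspan :: "'a::field set \<Rightarrow> ('n \<Rightarrow> 'a) set \<Rightarrow> ('n \<Rightarrow> 'a) set" where
  "kspan K S = \<Inter>{U. ksubspace K U \<and> S \<subseteq> U}"

definition kindep :: "'a::field set \<Rightarrow> ('n \<Rightarrow> 'a) set \<Rightarrow> bool" where
  "kindep K B \<longleftrightarrow> finite B \<and> (\<forall>c. (\<forall>b\<in>B. c b \<in> K) \<and> (\<lambda>i. \<Sum>b\<in>B. c b * b i) = (\<lambda>i. 0)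
      \<longrightarrow> (\<forall>b\<in>B. c b = 0))"

definition kspace :: "'a::field set \<Rightarrow> nat \<Rightarrow> ('n \<Rightarrow> 'a) set \<Rightarrow> bool" where
  "kspace K k U \<longleftrightarrow> ksubspace K U \<and> (\<exists>B. B \<subseteq> U \<and> kindep K B \<and> card B = k \<and> kspan K B = U)"

definition kpoint :: "'a::field set \<Rightarrow> ('n \<Rightarrow> 'a) \<Rightarrow> ('n \<Rightarrow> 'a) set" where
  "kpoint K x = {(\<lambda>i. c * x i) | c. c \<in> K}"

definition kpoints :: "'a::field set \<Rightarrow> ('n \<Rightarrow> 'a) set set" where
  "kpoints K = {kpoint K x | x. x \<in> Kvec K \<and> x \<noteq> (\<lambda>i. 0)}"

definition spanning :: "'a::field set \<Rightarrow> ('n \<Rightarrow> 'a) set set \<Rightarrow> bool" where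
  "spanning K S \<longleftrightarrow> kspan K (\<Union>S) = Kvec K"

definition pg_divisible :: "'a::field set \<Rightarrow> nat \<Rightarrow> ('n::finite \<Rightarrow> 'a) set set \<Rightarrow> bool" where
  "pg_divisible K e S \<longleftrightarrow> (\<forall>H::('n \<Rightarrow> 'a) set. kspace K (card (UNIV :: 'n set) - 1) H \<longrightarrow>
      card {P\<in>S. P \<subseteq> H} mod (card K ^ e) = card S mod (card K ^ e))"

text \<open>(r+1)-cylinder over K (Q = card K): a multiset of Q^(r+1) points which is the sum
 of L_i \ F (i < Q) with L_i (r+1)-spaces all containing the r-space F.\<close>
definition is_cylinder :: "'a::field set \<Rightarrow> nat \<Rightarrow> ('n \<Rightarrow> 'a) set multiset \<Rightarrow> bool" where
  "is_cylinder K r M \<longleftrightarrow> size M = card K ^ (r + 1) \<and>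
     (\<exists>F L. kspace K r F \<and> (\<forall>i<card K. kspace K (r + 1) (L i) \<and> F \<subseteq> L i) \<and>
        M = (\<Sum>i<card K. mset_set {P \<in> kpoints K. P \<subseteq> L i \<and> \<not> P \<subseteq> F}))"

end

theory Submission
  imports Defs "HOL-Library.Function_Algebras" "HOL-Library.FuncSet" "HOL-Library.Set_Algebras"
begin

text \<open>
  Write E for the whole field, so that K = F_q and |E| = q^h. A point of S' is the K-span of a
  vector x in K^v and its lift is the E-span of x. Two K-rational vectors are E-proportional only
  if they are K-proportional, so lifting is injective, |S| = |S'| = q^(2h), and S spans because
  K^v spans E^v.

  Fix an E-hyperplane H. Any additive subgroup A of E^v satisfies |A| <= q^h |A \<inter> H|. Hence
  |F \<inter> H| = q^b with 2h - 1 <= h + b, and since F has index q in each L_i of the cylinder,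
  |L_i \<inter> H| is q^b or q^(b+1); correspondingly L_i - F meets H in 0 or q^b points. If the
  first case occurs for some i, then q^(2h) <= q^h q^b, so q^h divides every summand; otherwise
  the count is q^(b+1) with b + 1 >= h. Either way q^h divides |S \<inter> H| and |S|.

  Finally, a 2-cylinder over E contains all points but one of some line. Two of these points are
  spanned by K-vectors x, y, and for all but one c in E the point spanned by x + c y is again
  spanned by a K-vector, which by Cramer's rule forces c \<in> K. Thus |E| <= |K| + 1,
  contradicting h >= 2.
\<close>

section \<open>Counting in abelian groups\<close>

definition additive_subgroup :: "'a::ab_group_add set \<Rightarrow> bool" where
  "additive_subgroup A \<longleftrightarrow> 0 \<in> A \<and> (\<forall>x\<in>A. \<forall>y\<in>A. x - y \<in> A)"

lemma additive_subgroupD: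
  assumes "additive_subgroup A"
  shows "0 \<in> A" and "x \<in> A \<Longrightarrow> y \<in> A \<Longrightarrow> x - y \<in> A"
    and "x \<in> A \<Longrightarrow> y \<in> A \<Longrightarrow> x + y \<in> A"
  using assms unfolding additive_subgroup_def by (auto, metis diff_0 diff_minus_eq_add)

lemma card_set_plus_Int:
  fixes A B :: "'a::ab_group_add set"
  assumes "finite A" "finite B" "additive_subgroup A" "additive_subgroup B"
  shows "card A * card B = card (A + B) * card (A \<inter> B)"
proof -
  define fibre where "fibre s = {p \<in> A \<times> B. fst p + snd p = s}" for s
  have card_fibre: "card (fibre s) = card (A \<inter> B)" if "s \<in> A + B" for s
  proof -
    obtain a b where ab: "a \<in> A" "b \<in> B" "s = a + b"
      using \<open>s \<in> A + B\<close> by (auto elim: set_plus_elim)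
    have "bij_betw (\<lambda>d. (a + d, b - d)) (A \<inter> B) (fibre s)"
    proof (rule bij_betw_byWitness[where f' = "\<lambda>p. fst p - a"])
      show "(\<lambda>d. (a + d, b - d)) ` (A \<inter> B) \<subseteq> fibre s"
        using ab additive_subgroupD[OF assms(3)] additive_subgroupD[OF assms(4)]
        by (auto simp: fibre_def)
      show "(\<lambda>p. fst p - a) ` fibre s \<subseteq> A \<inter> B"
      proof clarify
        fix x y assume "(x, y) \<in> fibre s"
        then have "x \<in> A" "y \<in> B" "x - a = b - y"
          using ab by (auto simp: fibre_def algebra_simps)
        moreover have "x - a \<in> A" "b - y \<in> B"
          using ab \<open>x \<in> A\<close> \<open>y \<in> B\<close> additive_subgroupD(2) assms(3,4) by blast+
        ultimately show "fst (x, y) - a \<in> A \<inter> B" by simp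
      qed
    qed (auto simp: fibre_def ab algebra_simps)
    then show ?thesis by (simp add: bij_betw_same_card)
  qed
  have "A \<times> B = (\<Union>s\<in>A + B. fibre s)"
    by (auto simp: fibre_def)
  moreover have "finite (A + B)"
    using assms(1,2) by (simp add: set_plus_image)
  moreover have "finite (fibre s)" for s
    using assms(1,2) by (simp add: fibre_def)
  moreover have "fibre s \<inter> fibre t = {}" if "s \<noteq> t" for s t
    using that by (auto simp: fibre_def)
  ultimately have "card (A \<times> B) = (\<Sum>s\<in>A + B. card (fibre s))"
    by (simp add: card_UN_disjoint)
  also have "\<dots> = card (A + B) * card (A \<inter> B)"
    using card_fibre by simp
  finally show ?thesis by (simp add: card_cartesian_product)
qed

context
  fixes K :: "'a::field set"
  assumes subfield: "subfield K"
begin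

lemma subfield_zero: "0 \<in> K"
  and subfield_one: "1 \<in> K"
  and subfield_add: "a \<in> K \<Longrightarrow> b \<in> K \<Longrightarrow> a + b \<in> K"
  and subfield_mult: "a \<in> K \<Longrightarrow> b \<in> K \<Longrightarrow> a * b \<in> K"
  and subfield_uminus: "a \<in> K \<Longrightarrow> - a \<in> K"
  and subfield_inverse: "a \<in> K \<Longrightarrow> inverse a \<in> K"
  using subfield unfolding subfield_def by (blast, blast, blast, blast, blast, metis inverse_zero)

lemma subfield_diff: "a \<in> K \<Longrightarrow> b \<in> K \<Longrightarrow> a - b \<in> K"
  by (metis diff_conv_add_uminus subfield_add subfield_uminus)

lemma subfield_divide: "a \<in> K \<Longrightarrow> b \<in> K \<Longrightarrow> a / b \<in> K"
  by (metis divide_inverse subfield_inverse subfield_mult)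

lemma subfield_sum: "(\<And>x. x \<in> A \<Longrightarrow> f x \<in> K) \<Longrightarrow> sum f A \<in> K"
  by (induction A rule: infinite_finite_induct) (auto intro: subfield_zero subfield_add)

lemma subfield_card_ge_2: "finite K \<Longrightarrow> 2 \<le> card K"
  using card_mono[of K "{0, 1}"] subfield_zero subfield_one by simp

end

lemma subfield_UNIV: "subfield UNIV"
  by (simp add: subfield_def)

lemma Kvec_UNIV: "Kvec UNIV = UNIV"
  by (simp add: Kvec_def)

lemma card_Kvec:
  "card (Kvec K :: ('n::finite \<Rightarrow> 'a::field) set) = card K ^ card (UNIV :: 'n set)"
proof -
  have "(Kvec K :: ('n \<Rightarrow> 'a) set) = (\<Pi>\<^sub>E i\<in>UNIV. K)"
    by (auto simp: Kvec_def PiE_def extensional_def Pi_def)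
  then show ?thesis by (simp add: card_PiE)
qed

lemma ksubspace_iff:
  "ksubspace K U \<longleftrightarrow> U \<subseteq> Kvec K \<and> 0 \<in> U \<and> (\<forall>x\<in>U. \<forall>y\<in>U. x + y \<in> U)
     \<and> (\<forall>c\<in>K. \<forall>x\<in>U. (\<lambda>i. c * x i) \<in> U)"
  unfolding ksubspace_def plus_fun_def zero_fun_def ..

context
  fixes K :: "'a::field set" and U :: "('n \<Rightarrow> 'a) set"
  assumes ksubspace: "ksubspace K U"
begin

lemma ksubspace_Kvec: "U \<subseteq> Kvec K"
  and ksubspace_zero: "0 \<in> U"
  and ksubspace_add: "x \<in> U \<Longrightarrow> y \<in> U \<Longrightarrow> x + y \<in> U"
  and ksubspace_smult: "c \<in> K \<Longrightarrow> x \<in> U \<Longrightarrow> (\<lambda>i. c * x i) \<in> U"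
  using ksubspace unfolding ksubspace_iff by blast+

lemma ksubspace_sum: "(\<And>a. a \<in> A \<Longrightarrow> f a \<in> U) \<Longrightarrow> sum f A \<in> U"
  by (induction A rule: infinite_finite_induct) (auto intro: ksubspace_zero ksubspace_add)

lemma additive_subgroup_ksubspace:
  assumes "subfield K"
  shows "additive_subgroup U"
proof -
  have "x - y \<in> U" if "x \<in> U" "y \<in> U" for x y
  proof -
    have "x + (\<lambda>i. (- 1) * y i) \<in> U"
      using that assms by (intro ksubspace_add ksubspace_smult subfield_uminus subfield_one)
    moreover have "x + (\<lambda>i. (- 1) * y i) = x - y"
      by (simp add: fun_eq_iff)
    ultimately show ?thesis by simp
  qed
  then show ?thesis
    unfolding additive_subgroup_def by (simp add: ksubspace_zero)
qed

end

lemma Kvec_ksubspace: "subfield K \<Longrightarrow> ksubspace K (Kvec K)"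
  unfolding ksubspace_iff Kvec_def by (simp add: subfield_zero subfield_add subfield_mult)

lemma ksubspace_zero_space: "subfield K \<Longrightarrow> ksubspace K {0}"
  unfolding ksubspace_iff Kvec_def by (simp add: subfield_zero zero_fun_def)

lemma ksubspace_Int_ksubspace_UNIV: "ksubspace K U \<Longrightarrow> ksubspace UNIV H \<Longrightarrow> ksubspace K (U \<inter> H)"
  unfolding ksubspace_iff by blast

lemma ksubspace_set_plus:
  assumes "subfield K" "ksubspace K U" "ksubspace K V"
  shows "ksubspace K (U + V)"
  unfolding ksubspace_iff
proof (intro conjI ballI)
  show "U + V \<subseteq> Kvec K"
  proof
    fix x assume "x \<in> U + V"
    then obtain u v where "x = u + v" "u \<in> U" "v \<in> V"
      by (rule set_plus_elim)
    then show "x \<in> Kvec K"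
      using assms ksubspace_Kvec ksubspace_add[OF Kvec_ksubspace[OF assms(1)]] by blast
  qed
  show "0 \<in> U + V"
    using set_plus_intro[OF ksubspace_zero ksubspace_zero] assms(2,3) by fastforce
next
  fix x y assume "x \<in> U + V" "y \<in> U + V"
  then obtain u v u' v' where "u \<in> U" "v \<in> V" "u' \<in> U" "v' \<in> V" "x = u + v" "y = u' + v'"
    by (auto elim!: set_plus_elim)
  then have "x + y = (u + u') + (v + v')"
    by (simp add: algebra_simps)
  also have "\<dots> \<in> U + V"
    using \<open>u \<in> U\<close> \<open>v \<in> V\<close> \<open>u' \<in> U\<close> \<open>v' \<in> V\<close>
    by (intro set_plus_intro ksubspace_add[OF assms(2)] ksubspace_add[OF assms(3)])
  finally show "x + y \<in> U + V" .
next
  fix c x assume "c \<in> K" "x \<in> U + V"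
  then obtain u v where "u \<in> U" "v \<in> V" "x = u + v"
    by (auto elim!: set_plus_elim)
  then have "(\<lambda>i. c * x i) = (\<lambda>i. c * u i) + (\<lambda>i. c * v i)"
    by (simp add: fun_eq_iff distrib_left)
  also have "\<dots> \<in> U + V"
    using \<open>u \<in> U\<close> \<open>v \<in> V\<close> \<open>c \<in> K\<close>
    by (intro set_plus_intro ksubspace_smult[OF assms(2)] ksubspace_smult[OF assms(3)])
  finally show "(\<lambda>i. c * x i) \<in> U + V" .
qed

lemma ksubspace_line:
  "ksubspace K U \<Longrightarrow> x \<in> U \<Longrightarrow> y \<in> U \<Longrightarrow> c \<in> K \<Longrightarrow> (\<lambda>i. x i + c * y i) \<in> U"
  using ksubspace_add[of K U x "\<lambda>i. c * y i"] ksubspace_smult[of K U c y] by (simp add: plus_fun_def)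

lemma kpoints_iff: "P \<in> kpoints K \<longleftrightarrow> (\<exists>x. x \<in> Kvec K \<and> x \<noteq> 0 \<and> P = kpoint K x)"
  unfolding kpoints_def zero_fun_def by blast

lemma card_kpoint:
  assumes "x \<noteq> 0"
  shows "card (kpoint K x) = card K"
proof -
  obtain j where "x j \<noteq> 0"
    using assms by (auto simp: fun_eq_iff)
  then have "inj_on (\<lambda>c i. c * x i) K"
    by (auto intro!: inj_onI dest: fun_cong[where x = j])
  moreover have "kpoint K x = (\<lambda>c i. c * x i) ` K"
    unfolding kpoint_def by blast
  ultimately show ?thesis by (simp add: card_image)
qed

context
  fixes K :: "'a::field set"
  assumes subfield: "subfield K"
begin

lemma kpoint_self: "x \<in> kpoint K x"
proof -
  have "(\<lambda>i. 1 * x i) \<in> kpoint K x"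
    unfolding kpoint_def using subfield_one[OF subfield] by blast
  then show ?thesis by simp
qed

lemma zero_in_kpoint: "0 \<in> kpoint K x"
proof -
  have "(\<lambda>i. 0 * x i) \<in> kpoint K x"
    unfolding kpoint_def using subfield_zero[OF subfield] by blast
  then show ?thesis by (simp add: zero_fun_def)
qed

lemma kpoint_subset_iff: "ksubspace K A \<Longrightarrow> kpoint K x \<subseteq> A \<longleftrightarrow> x \<in> A"
  using kpoint_self ksubspace_smult unfolding kpoint_def by blast

lemma kpoint_eq_if_mem:
  assumes "z \<in> kpoint K x" "z \<noteq> 0"
  shows "kpoint K z = kpoint K x"
proof -
  obtain c where c: "c \<in> K" "z = (\<lambda>i. c * x i)"
    using assms(1) unfolding kpoint_def by blast
  with assms(2) have "c \<noteq> 0"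
    by (auto simp: zero_fun_def)
  show ?thesis
  proof (intro set_eqI iffI)
    fix y assume "y \<in> kpoint K z"
    then obtain d where "d \<in> K" "y = (\<lambda>i. d * z i)"
      unfolding kpoint_def by blast
    then have "y = (\<lambda>i. (d * c) * x i)" "d * c \<in> K"
      using c subfield_mult[OF subfield] by (auto simp: mult.assoc)
    then show "y \<in> kpoint K x"
      unfolding kpoint_def by blast
  next
    fix y assume "y \<in> kpoint K x"
    then obtain d where "d \<in> K" "y = (\<lambda>i. d * x i)"
      unfolding kpoint_def by blast
    then have "y = (\<lambda>i. (d / c) * z i)" "d / c \<in> K"
      using c \<open>c \<noteq> 0\<close> subfield_divide[OF subfield] by auto
    then show "y \<in> kpoint K z"
      unfolding kpoint_def by blast
  qed
qed

lemma kpoints_eq_if_common_vector: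
  assumes "P \<in> kpoints K" "Q \<in> kpoints K" "z \<in> P" "z \<in> Q" "z \<noteq> 0"
  shows "P = Q"
  using assms kpoint_eq_if_mem unfolding kpoints_iff by metis

lemma ksubspace_kpoint: "x \<in> Kvec K \<Longrightarrow> ksubspace K (kpoint K x)"
  unfolding ksubspace_iff
proof (intro conjI ballI)
  assume "x \<in> Kvec K"
  then show "kpoint K x \<subseteq> Kvec K"
    unfolding kpoint_def using ksubspace_smult[OF Kvec_ksubspace[OF subfield]] by blast
  show "0 \<in> kpoint K x" by (rule zero_in_kpoint)
next
  fix y z assume "y \<in> kpoint K x" "z \<in> kpoint K x"
  then obtain c d where "c \<in> K" "d \<in> K" "y = (\<lambda>i. c * x i)" "z = (\<lambda>i. d * x i)"
    unfolding kpoint_def by blast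
  moreover have "(\<lambda>i. c * x i) + (\<lambda>i. d * x i) = (\<lambda>i. (c + d) * x i)"
    by (simp add: fun_eq_iff distrib_right)
  ultimately show "y + z \<in> kpoint K x"
    unfolding kpoint_def using subfield_add[OF subfield] by auto
next
  fix a y assume "a \<in> K" "y \<in> kpoint K x"
  then show "(\<lambda>i. a * y i) \<in> kpoint K x"
    unfolding kpoint_def using subfield_mult[OF subfield]
    by (auto simp: mult.assoc[symmetric])
qed

lemma ksubspace_Int_kpoint:
  assumes "ksubspace K V" "x \<notin> V"
  shows "V \<inter> kpoint K x = {0}"
proof -
  have "z = 0" if "z \<in> V" "z \<in> kpoint K x" for z
  proof (rule ccontr)
    assume "z \<noteq> 0"
    then have "kpoint K x \<subseteq> V"
      using that assms(1) kpoint_eq_if_mem kpoint_subset_iff by metis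
    then show False
      using assms(2) kpoint_self by blast
  qed
  then show ?thesis
    using ksubspace_zero[OF assms(1)] zero_in_kpoint by blast
qed

lemma card_set_plus_kpoint:
  assumes "finite K" "finite V" "ksubspace K V" "x \<in> Kvec K" "x \<notin> V"
  shows "card (V + kpoint K x) = card K * card V"
proof -
  have "x \<noteq> 0"
    using assms(3,5) ksubspace_zero by blast
  have "card V * card (kpoint K x) = card (V + kpoint K x) * card (V \<inter> kpoint K x)"
    using assms additive_subgroup_ksubspace ksubspace_kpoint subfield
    by (intro card_set_plus_Int) (auto simp: kpoint_def)
  then show ?thesis
    using ksubspace_Int_kpoint[OF assms(3,5)] card_kpoint[OF \<open>x \<noteq> 0\<close>] by (simp add: mult.commute)
qed

lemma ksubspace_card_power:
  assumes "finite K" "finite U" "ksubspace K U"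
  shows "\<exists>d. card U = card K ^ d"
proof -
  have grow: "\<exists>d. card U = card K ^ d"
    if "ksubspace K V" "V \<subseteq> U" "card V = card K ^ e" for V e
    using that
  proof (induction "card U - card V" arbitrary: V e rule: less_induct)
    case less
    show ?case
    proof (cases "V = U")
      case True
      then show ?thesis using less.prems by blast
    next
      case False
      then obtain x where x: "x \<in> U" "x \<notin> V"
        using less.prems(2) by blast
      have "finite V"
        using assms(2) less.prems(2) finite_subset by blast
      have x_vec: "x \<in> Kvec K"
        using x(1) ksubspace_Kvec[OF assms(3)] by blast
      define V' where "V' = V + kpoint K x"
      have card_V': "card V' = card K ^ Suc e"
        unfolding V'_def
        using card_set_plus_kpoint[OF assms(1) \<open>finite V\<close> less.prems(1) x_vec x(2)] less.prems(3)
        by simp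
      have "kpoint K x \<subseteq> U"
        using x(1) kpoint_subset_iff[OF assms(3)] by blast
      then have "V' \<subseteq> U"
        unfolding V'_def using less.prems(2) ksubspace_add[OF assms(3)]
        by (auto elim!: set_plus_elim)
      moreover have "card V < card V'"
        using card_V' less.prems(3) subfield_card_ge_2[OF subfield assms(1)] by simp
      moreover have "card V' \<le> card U"
        using \<open>V' \<subseteq> U\<close> assms(2) by (rule card_mono[rotated])
      ultimately show ?thesis
        using less.hyps[of V' "Suc e"] card_V'
          ksubspace_set_plus[OF subfield less.prems(1) ksubspace_kpoint[OF x_vec]]
        unfolding V'_def by simp
    qed
  qed
  show ?thesis
    using grow[of "{0}" 0] ksubspace_zero_space[OF subfield] ksubspace_zero[OF assms(3)] by simp
qed

lemma card_kpoints_between: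
  assumes "finite L" "ksubspace K F" "ksubspace K L" "F \<subseteq> L"
  shows "(card K - 1) * card {P \<in> kpoints K. P \<subseteq> L \<and> \<not> P \<subseteq> F} = card L - card F"
proof -
  define Pts where "Pts = {P \<in> kpoints K. P \<subseteq> L \<and> \<not> P \<subseteq> F}"
  have points_cover: "L - F = (\<Union>P\<in>Pts. P - {0})"
  proof
    show "L - F \<subseteq> (\<Union>P\<in>Pts. P - {0})"
    proof
      fix x assume x: "x \<in> L - F"
      then have "x \<in> Kvec K" "x \<noteq> 0"
        using ksubspace_Kvec[OF assms(3)] ksubspace_zero[OF assms(2)] by auto
      moreover have "kpoint K x \<subseteq> L" "\<not> kpoint K x \<subseteq> F"
        using x kpoint_subset_iff[OF assms(2)] kpoint_subset_iff[OF assms(3)] by auto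
      ultimately have "kpoint K x \<in> Pts"
        unfolding Pts_def kpoints_iff by (auto intro!: exI[of _ x])
      then show "x \<in> (\<Union>P\<in>Pts. P - {0})"
        using kpoint_self \<open>x \<noteq> 0\<close> by blast
    qed
    show "(\<Union>P\<in>Pts. P - {0}) \<subseteq> L - F"
    proof
      fix z assume "z \<in> (\<Union>P\<in>Pts. P - {0})"
      then obtain P where "P \<in> Pts" "z \<in> P" "z \<noteq> 0"
        by blast
      then obtain x where "P = kpoint K x" "P \<subseteq> L" "\<not> P \<subseteq> F"
        unfolding Pts_def kpoints_iff by blast
      then show "z \<in> L - F"
        using \<open>z \<in> P\<close> \<open>z \<noteq> 0\<close> kpoint_eq_if_mem kpoint_subset_iff[OF assms(2)] by blast
    qed
  qed
  have "finite Pts"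
    using assms(1) unfolding Pts_def by (simp add: finite_subset[of _ "Pow L"] subset_iff)
  have card_point: "card (P - {0}) = card K - 1" if P: "P \<in> Pts" for P
  proof -
    obtain x where "x \<noteq> 0" "P = kpoint K x" "P \<subseteq> L"
      using P unfolding Pts_def kpoints_iff by blast
    then show ?thesis
      using card_kpoint[of x K] zero_in_kpoint[of x] assms(1) card_Diff_singleton rev_finite_subset
      by metis
  qed
  have "card L - card F = card (L - F)"
    using assms(1,4) by (simp add: card_Diff_subset rev_finite_subset)
  also have "\<dots> = (\<Sum>P\<in>Pts. card (P - {0}))"
    unfolding points_cover
  proof (rule card_UN_disjoint[OF \<open>finite Pts\<close>])
    show "\<forall>P\<in>Pts. finite (P - {0})"
      using assms(1) unfolding Pts_def by (blast intro: rev_finite_subset)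
    show "\<forall>P\<in>Pts. \<forall>Q\<in>Pts. P \<noteq> Q \<longrightarrow> (P - {0}) \<inter> (Q - {0}) = {}"
      unfolding Pts_def using kpoints_eq_if_common_vector by blast
  qed
  also have "\<dots> = (card K - 1) * card Pts"
    using card_point by simp
  finally show ?thesis
    unfolding Pts_def by simp
qed

end

section \<open>Spans and sizes of subspaces\<close>

lemma sum_apply: "sum f A i = (\<Sum>a\<in>A. f a i)"
  by (induction A rule: infinite_finite_induct) auto

lemma ksubspace_lincombs:
  assumes "subfield K" "B \<subseteq> Kvec K"
  shows "ksubspace K {(\<lambda>i. \<Sum>b\<in>B. c b * b i) | c. \<forall>b\<in>B. c b \<in> K}" (is "ksubspace K ?C")
  unfolding ksubspace_iff
proof (intro conjI ballI subsetI)
  fix x assume "x \<in> ?C"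
  then obtain c where c: "\<forall>b\<in>B. c b \<in> K" "x = (\<lambda>i. \<Sum>b\<in>B. c b * b i)"
    by blast
  then show "x \<in> Kvec K"
    using assms(2) unfolding Kvec_def
    by (auto intro!: subfield_sum[OF assms(1)] subfield_mult[OF assms(1)])
next
  show "0 \<in> ?C"
    by (intro CollectI exI[of _ "\<lambda>_. 0"] conjI) (simp_all add: zero_fun_def subfield_zero[OF assms(1)])
next
  fix x y assume "x \<in> ?C" "y \<in> ?C"
  then obtain c d where "\<forall>b\<in>B. c b \<in> K" "x = (\<lambda>i. \<Sum>b\<in>B. c b * b i)"
    and "\<forall>b\<in>B. d b \<in> K" "y = (\<lambda>i. \<Sum>b\<in>B. d b * b i)"
    by blast
  moreover have "x + y = (\<lambda>i. \<Sum>b\<in>B. (c b + d b) * b i)"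
    using calculation by (simp add: fun_eq_iff distrib_right sum.distrib)
  ultimately show "x + y \<in> ?C"
    by (intro CollectI exI[of _ "\<lambda>b. c b + d b"] conjI) (simp_all add: subfield_add[OF assms(1)])
next
  fix a x assume "a \<in> K" "x \<in> ?C"
  then obtain c where "\<forall>b\<in>B. c b \<in> K" "x = (\<lambda>i. \<Sum>b\<in>B. c b * b i)"
    by blast
  moreover have "(\<lambda>i. a * x i) = (\<lambda>i. \<Sum>b\<in>B. (a * c b) * b i)"
    using calculation by (simp add: sum_distrib_left mult.assoc)
  ultimately show "(\<lambda>i. a * x i) \<in> ?C"
    using \<open>a \<in> K\<close>
    by (intro CollectI exI[of _ "\<lambda>b. a * c b"] conjI) (simp_all add: subfield_mult[OF assms(1)])
qed

lemma kspan_eq_lincombs: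
  assumes "subfield K" "finite B" "B \<subseteq> Kvec K"
  shows "kspan K B = {(\<lambda>i. \<Sum>b\<in>B. c b * b i) | c. \<forall>b\<in>B. c b \<in> K}" (is "_ = ?C")
proof
  have "ksubspace K ?C"
    using assms(1,3) by (rule ksubspace_lincombs)
  moreover have "B \<subseteq> ?C"
  proof
    fix b' assume "b' \<in> B"
    have "(\<lambda>i. \<Sum>b\<in>B. (if b = b' then 1 else 0) * b i) = b'"
    proof
      fix i
      have "(\<Sum>b\<in>B. (if b = b' then 1 else 0) * b i) = (\<Sum>b\<in>B. if b = b' then b' i else 0)"
        by (rule sum.cong) auto
      then show "(\<Sum>b\<in>B. (if b = b' then 1 else 0) * b i) = b' i"
        using \<open>b' \<in> B\<close> assms(2) by simp
    qed
    moreover have "(\<lambda>i. \<Sum>b\<in>B. (if b = b' then 1 else 0) * b i) \<in> ?C"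
      by (intro CollectI exI[of _ "\<lambda>b. if b = b' then 1 else 0"] conjI)
        (simp_all add: subfield_zero[OF assms(1)] subfield_one[OF assms(1)])
    ultimately show "b' \<in> ?C" by simp
  qed
  ultimately show "kspan K B \<subseteq> ?C"
    unfolding kspan_def by blast
  show "?C \<subseteq> kspan K B"
    unfolding kspan_def
  proof (intro Inter_greatest subsetI)
    fix U x assume U: "U \<in> {U. ksubspace K U \<and> B \<subseteq> U}" and "x \<in> ?C"
    then obtain c where c: "\<forall>b\<in>B. c b \<in> K" "x = (\<lambda>i. \<Sum>b\<in>B. c b * b i)"
      by blast
    then have "x = (\<Sum>b\<in>B. (\<lambda>i. c b * b i))"
      by (simp add: fun_eq_iff sum_apply)
    also have "\<dots> \<in> U"
      using U c(1) by (auto intro!: ksubspace_sum ksubspace_smult)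
    finally show "x \<in> U" .
  qed
qed

lemma card_kspan_kindep:
  assumes "subfield K" "kindep K B" "B \<subseteq> Kvec K"
  shows "card (kspan K B) = card K ^ card B"
proof -
  have "finite B"
    using assms(2) unfolding kindep_def by blast
  define lincomb where "lincomb c = (\<lambda>i. \<Sum>b\<in>B. c b * b i)" for c
  have "kspan K B = lincomb ` (\<Pi>\<^sub>E b\<in>B. K)"
  proof (intro set_eqI iffI)
    fix x assume "x \<in> kspan K B"
    then obtain c where "x = lincomb c" "\<forall>b\<in>B. c b \<in> K"
      unfolding kspan_eq_lincombs[OF assms(1) \<open>finite B\<close> assms(3)] lincomb_def by blast
    moreover have "lincomb (restrict c B) = lincomb c"
      unfolding lincomb_def by (simp add: fun_eq_iff)
    ultimately show "x \<in> lincomb ` (\<Pi>\<^sub>E b\<in>B. K)"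
      by (metis PiE_restrict PiE_iff image_eqI restrict_PiE_iff)
  next
    fix x assume "x \<in> lincomb ` (\<Pi>\<^sub>E b\<in>B. K)"
    then obtain c where "x = lincomb c" "\<forall>b\<in>B. c b \<in> K"
      by (auto simp: PiE_iff)
    then show "x \<in> kspan K B"
      unfolding kspan_eq_lincombs[OF assms(1) \<open>finite B\<close> assms(3)] lincomb_def by blast
  qed
  moreover have "inj_on lincomb (\<Pi>\<^sub>E b\<in>B. K)"
  proof
    fix c d assume c: "c \<in> (\<Pi>\<^sub>E b\<in>B. K)" and d: "d \<in> (\<Pi>\<^sub>E b\<in>B. K)" and "lincomb c = lincomb d"
    then have "(\<lambda>i. \<Sum>b\<in>B. (c b - d b) * b i) = (\<lambda>i. 0)"
      unfolding lincomb_def by (simp add: fun_eq_iff left_diff_distrib sum_subtractf)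
    moreover have "\<forall>b\<in>B. c b - d b \<in> K"
      using c d subfield_diff[OF assms(1)] by (auto simp: PiE_iff)
    ultimately have "\<forall>b\<in>B. c b - d b = 0"
      using assms(2) unfolding kindep_def by (blast dest: spec[of _ "\<lambda>b. c b - d b"])
    then show "c = d"
      by (intro PiE_ext[OF c d]) simp
  qed
  ultimately show ?thesis
    using \<open>finite B\<close> by (simp add: card_image card_PiE)
qed

lemma card_kspace:
  assumes "subfield K" "kspace K k U"
  shows "card U = card K ^ k"
  using assms card_kspan_kindep ksubspace_Kvec unfolding kspace_def by (metis subset_trans)

lemma kspan_singleton:
  assumes "subfield K" "b \<in> Kvec K"
  shows "kspan K {b} = kpoint K b"
  unfolding kspan_def
proof (rule antisym)
  show "\<Inter>{U. ksubspace K U \<and> {b} \<subseteq> U} \<subseteq> kpoint K b"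
    using ksubspace_kpoint[OF assms] kpoint_self[OF assms(1)] by (intro Inter_lower) simp
  show "kpoint K b \<subseteq> \<Inter>{U. ksubspace K U \<and> {b} \<subseteq> U}"
  proof (rule Inter_greatest)
    fix U assume "U \<in> {U. ksubspace K U \<and> {b} \<subseteq> U}"
    then show "kpoint K b \<subseteq> U"
      using kpoint_subset_iff[OF assms(1)] by blast
  qed
qed

lemma kspace_one_eq_kpoint:
  assumes "subfield K" "kspace K 1 P"
  shows "\<exists>b. P = kpoint K b"
proof -
  obtain b where "b \<in> P" "kspan K {b} = P" "ksubspace K P"
    using assms(2) unfolding kspace_def by (metis card_1_singletonE insert_subset)
  then show ?thesis
    using kspan_singleton[OF assms(1)] ksubspace_Kvec by blast
qed

lemma card_le_card_Int_hyperplane: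
  fixes A H :: "('n::finite \<Rightarrow> 'a::{field,finite}) set"
  assumes "additive_subgroup A" "kspace UNIV (card (UNIV :: 'n set) - 1) H"
  shows "card A \<le> card (UNIV :: 'a set) * card (A \<inter> H)"
proof -
  let ?Q = "card (UNIV :: 'a set)" and ?v = "card (UNIV :: 'n set)"
  have "ksubspace UNIV H"
    using assms(2) unfolding kspace_def by blast
  then have H: "additive_subgroup H"
    by (rule additive_subgroup_ksubspace[OF _ subfield_UNIV])
  have card_H: "card H = ?Q ^ (?v - 1)"
    by (rule card_kspace[OF subfield_UNIV assms(2)])
  have "?v = Suc (?v - 1)"
    using finite_UNIV_card_ge_0[where 'a = 'n] by simp
  then have Q_pow: "?Q ^ ?v = ?Q * card H"
    unfolding card_H by (metis power_Suc)
  have "card (A + H) \<le> card (UNIV :: ('n \<Rightarrow> 'a) set)"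
    by (rule card_mono) simp_all
  also have "\<dots> = ?Q * card H"
    using card_Kvec[of "UNIV :: 'a set", where 'n = 'n] Q_pow by (simp add: Kvec_UNIV)
  finally have "card A * card H \<le> (?Q * card H) * card (A \<inter> H)"
    using card_set_plus_Int[OF _ _ assms(1) H] by simp
  then have "card A * card H \<le> (?Q * card (A \<inter> H)) * card H"
    by (simp add: ac_simps)
  moreover have "0 < card H"
    unfolding card_H using finite_UNIV_card_ge_0[where 'a = 'a] by simp
  ultimately show ?thesis
    by simp
qed

section \<open>Lifting points to the full field\<close>

definition lift_point :: "('n \<Rightarrow> 'a::field) set \<Rightarrow> ('n \<Rightarrow> 'a) set" where
  "lift_point P = {(\<lambda>i. c * y i) | c y. y \<in> P}"

lemma subset_lift_point: "P \<subseteq> lift_point P"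
proof
  fix y assume "y \<in> P"
  then have "(\<lambda>i. 1 * y i) \<in> lift_point P"
    unfolding lift_point_def by blast
  then show "y \<in> lift_point P" by simp
qed

lemma lift_point_kpoint:
  assumes "subfield K"
  shows "lift_point (kpoint K x) = kpoint UNIV x"
proof (intro set_eqI iffI)
  fix z assume "z \<in> lift_point (kpoint K x)"
  then obtain c d where "z = (\<lambda>i. c * (d * x i))"
    unfolding lift_point_def kpoint_def by blast
  then have "z = (\<lambda>i. (c * d) * x i)"
    by (simp add: mult.assoc)
  then show "z \<in> kpoint UNIV x"
    unfolding kpoint_def by blast
next
  fix z assume "z \<in> kpoint UNIV x"
  then obtain c where "z = (\<lambda>i. c * x i)"
    unfolding kpoint_def by blast
  moreover have "x \<in> kpoint K x"
    by (rule kpoint_self[OF assms])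
  ultimately show "z \<in> lift_point (kpoint K x)"
    unfolding lift_point_def by blast
qed

lemma kpoint_eq_if_kpoint_UNIV_eq:
  assumes "subfield K" "x \<in> Kvec K" "x \<noteq> 0" "y \<in> Kvec K" "y \<noteq> 0"
    and "kpoint UNIV x = kpoint UNIV y"
  shows "kpoint K x = kpoint K y"
proof -
  have "y \<in> kpoint UNIV x"
    using assms(6) kpoint_self[OF subfield_UNIV] by blast
  then obtain c where c: "y = (\<lambda>i. c * x i)"
    unfolding kpoint_def by blast
  obtain j where "x j \<noteq> 0"
    using assms(3) by (auto simp: fun_eq_iff)
  then have "c = y j / x j"
    by (simp add: c)
  then have "c \<in> K"
    using assms(2,4) subfield_divide[OF assms(1)] unfolding Kvec_def by simp
  then have "y \<in> kpoint K x"
    unfolding kpoint_def c by blast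
  then show ?thesis
    using kpoint_eq_if_mem[OF assms(1) _ assms(5)] by simp
qed

lemma kpoints_subset_Kvec:
  assumes "subfield K" "P \<in> kpoints K"
  shows "P \<subseteq> Kvec K"
proof -
  obtain x where "x \<in> Kvec K" "P = kpoint K x"
    using assms(2) unfolding kpoints_iff by blast
  then show ?thesis
    using ksubspace_Kvec[OF ksubspace_kpoint[OF assms(1)]] by blast
qed

lemma inj_on_lift_point:
  assumes "subfield K"
  shows "inj_on lift_point (kpoints K)"
proof
  fix P Q assume "P \<in> kpoints K" "Q \<in> kpoints K" "lift_point P = lift_point Q"
  then obtain x y where "x \<in> Kvec K" "x \<noteq> 0" "P = kpoint K x" "y \<in> Kvec K" "y \<noteq> 0" "Q = kpoint K y"
    and "kpoint UNIV x = kpoint UNIV y"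
    unfolding kpoints_iff using lift_point_kpoint[OF assms] by metis
  then show "P = Q"
    using kpoint_eq_if_kpoint_UNIV_eq[OF assms] by simp
qed

lemma lift_point_kpoints:
  assumes "subfield K" "P \<in> kpoints K"
  obtains z where "z \<in> Kvec K" "z \<noteq> 0" "P = kpoint K z" "lift_point P = kpoint UNIV z"
  using assms(2) lift_point_kpoint[OF assms(1)] unfolding kpoints_iff by blast

lemma lift_point_subset_iff:
  assumes "subfield K" "P \<in> kpoints K" "ksubspace UNIV H"
  shows "lift_point P \<subseteq> H \<longleftrightarrow> P \<subseteq> H"
proof -
  obtain x where "P = kpoint K x"
    using assms(2) unfolding kpoints_iff by blast
  then have "lift_point P = kpoint UNIV x" "x \<in> P"
    using lift_point_kpoint[OF assms(1)] kpoint_self[OF assms(1)] by simp_all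
  then show ?thesis
    using kpoint_subset_iff[OF subfield_UNIV assms(3)] subset_lift_point by blast
qed

lemma lifted_points_eq_image:
  assumes "subfield K" "T \<subseteq> kpoints K"
  shows "{kpoint UNIV x | x. x \<in> Kvec K \<and> x \<noteq> (\<lambda>i. 0) \<and> kpoint K x \<in> T} = lift_point ` T"
proof (intro set_eqI iffI)
  fix Q assume "Q \<in> {kpoint UNIV x | x. x \<in> Kvec K \<and> x \<noteq> (\<lambda>i. 0) \<and> kpoint K x \<in> T}"
  then obtain x where "Q = kpoint UNIV x" "kpoint K x \<in> T"
    by blast
  then show "Q \<in> lift_point ` T"
    using lift_point_kpoint[OF assms(1)] by (metis image_eqI)
next
  fix Q assume "Q \<in> lift_point ` T"
  then obtain P where "P \<in> T" "Q = lift_point P"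
    by blast
  moreover obtain x where "x \<in> Kvec K" "x \<noteq> 0" "P = kpoint K x" "lift_point P = kpoint UNIV x"
    using lift_point_kpoints[OF assms(1)] \<open>P \<in> T\<close> assms(2) by blast
  ultimately have "x \<in> Kvec K" "x \<noteq> 0" "kpoint K x \<in> T" "Q = kpoint UNIV x"
    by simp_all
  then show "Q \<in> {kpoint UNIV x | x. x \<in> Kvec K \<and> x \<noteq> (\<lambda>i. 0) \<and> kpoint K x \<in> T}"
    by (auto simp: zero_fun_def)
qed

lemma card_lifted_points_in_subspace:
  assumes "subfield K" "T \<subseteq> kpoints K" "ksubspace UNIV H"
  shows "card {Q \<in> lift_point ` T. Q \<subseteq> H} = card {P \<in> T. P \<subseteq> H}"
proof -
  have "{Q \<in> lift_point ` T. Q \<subseteq> H} = lift_point ` {P \<in> T. P \<subseteq> H}"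
    using assms lift_point_subset_iff by blast
  moreover have "inj_on lift_point {P \<in> T. P \<subseteq> H}"
    by (rule inj_on_subset[OF inj_on_lift_point[OF assms(1)]]) (use assms(2) in blast)
  ultimately show ?thesis
    by (simp add: card_image)
qed

lemma card_lift_image:
  assumes "subfield K" "T \<subseteq> kpoints K"
  shows "card (lift_point ` T) = card T"
  using card_image[OF inj_on_subset[OF inj_on_lift_point[OF assms(1)] assms(2)]] .

lemma ksubspace_UNIV_eq_UNIV:
  fixes U :: "('n::finite \<Rightarrow> 'a::field) set"
  assumes "subfield K" "ksubspace UNIV U" "Kvec K \<subseteq> U"
  shows "U = UNIV"
proof (intro set_eqI iffI)
  fix z :: "'n \<Rightarrow> 'a"
  define e where "e j = (\<lambda>i. if i = j then 1 else 0 :: 'a)" for j :: 'n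
  have "e j \<in> U" for j
    using assms(3) subfield_zero[OF assms(1)] subfield_one[OF assms(1)]
    unfolding e_def Kvec_def by auto
  then have "(\<Sum>j\<in>UNIV. (\<lambda>i. z j * e j i)) \<in> U"
    by (intro ksubspace_sum[OF assms(2)] ksubspace_smult[OF assms(2)]) simp_all
  moreover have "(\<Sum>j\<in>UNIV. (\<lambda>i. z j * e j i)) = z"
    by (simp add: fun_eq_iff sum_apply e_def if_distrib cong: if_cong)
  ultimately show "z \<in> U" by simp
qed simp

lemma spanning_lift:
  fixes T :: "('n::finite \<Rightarrow> 'a::field) set set"
  assumes "subfield K" "T \<subseteq> kpoints K" "spanning K T"
  shows "spanning UNIV (lift_point ` T)"
proof -
  have "U = UNIV" if "ksubspace UNIV U" "\<Union>(lift_point ` T) \<subseteq> U" for U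
  proof -
    have "P \<subseteq> Kvec K" if "P \<in> T" for P
      using that assms(2) kpoints_subset_Kvec[OF assms(1)] by blast
    then have "\<Union>T \<subseteq> U \<inter> Kvec K"
      using \<open>\<Union>(lift_point ` T) \<subseteq> U\<close> subset_lift_point by blast
    moreover have "ksubspace K (U \<inter> Kvec K)"
      using ksubspace_Int_ksubspace_UNIV[OF Kvec_ksubspace[OF assms(1)] that(1)] by (simp add: Int_commute)
    ultimately have "kspan K (\<Union>T) \<subseteq> U"
      unfolding kspan_def by blast
    then show "U = UNIV"
      using assms(3) ksubspace_UNIV_eq_UNIV[OF assms(1) that(1)] unfolding spanning_def by simp
  qed
  then show ?thesis
    unfolding spanning_def kspan_def Kvec_UNIV by blast
qed

section \<open>Lifted point sets are not 2-cylinders\<close>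

definition independent2 :: "('n \<Rightarrow> 'a::field) \<Rightarrow> ('n \<Rightarrow> 'a) \<Rightarrow> bool" where
  "independent2 x y \<longleftrightarrow> (\<forall>a b. (\<forall>i. a * x i + b * y i = 0) \<longrightarrow> a = 0 \<and> b = 0)"

lemma independent2_line_nonzero:
  assumes "independent2 x y"
  shows "(\<lambda>i. x i + c * y i) \<noteq> 0"
proof
  assume "(\<lambda>i. x i + c * y i) = 0"
  then have "\<forall>i. 1 * x i + c * y i = 0"
    by (simp add: fun_eq_iff)
  with assms show False
    unfolding independent2_def by (metis one_neq_zero)
qed

lemma independent2_line_kpoint_inj:
  assumes "independent2 u w"
    and "kpoint UNIV (\<lambda>i. u i + c * w i) = kpoint UNIV (\<lambda>i. u i + c' * w i)"
  shows "c = c'"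
proof -
  have "(\<lambda>i. u i + c' * w i) \<in> kpoint UNIV (\<lambda>i. u i + c * w i)"
    using assms(2) kpoint_self[OF subfield_UNIV] by blast
  then obtain l where "\<forall>i. u i + c' * w i = l * (u i + c * w i)"
    unfolding kpoint_def by (auto simp: fun_eq_iff)
  then have "\<forall>i. (1 - l) * u i + (c' - l * c) * w i = 0"
    by (simp add: algebra_simps)
  then have "1 - l = 0" "c' - l * c = 0"
    using assms(1) unfolding independent2_def by blast+
  then show ?thesis
    by simp
qed

lemma independent2_if_kpoint_neq:
  assumes "x \<noteq> 0" "y \<noteq> 0" "kpoint UNIV x \<noteq> kpoint UNIV y"
  shows "independent2 x y"
  unfolding independent2_def
proof (intro allI impI)
  fix a b assume ab: "\<forall>i. a * x i + b * y i = 0"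
  have "a = 0"
  proof (rule ccontr)
    assume "a \<noteq> 0"
    then have "x = (\<lambda>i. (- b / a) * y i)"
      using ab by (auto simp: fun_eq_iff field_simps eq_neg_iff_add_eq_0)
    then have "kpoint UNIV x = kpoint UNIV y"
      using kpoint_eq_if_mem[OF subfield_UNIV _ assms(1)] unfolding kpoint_def by blast
    with assms(3) show False ..
  qed
  moreover from this have "b = 0"
    using ab assms(2) by (auto simp: fun_eq_iff)
  ultimately show "a = 0 \<and> b = 0" ..
qed

lemma kspace_two_independent2:
  assumes "kspace UNIV 2 L"
  shows "\<exists>u w. u \<in> L \<and> w \<in> L \<and> independent2 u w"
proof -
  obtain B where B: "B \<subseteq> L" "kindep UNIV B" "card B = 2"
    using assms unfolding kspace_def by blast
  then obtain u w where uw: "B = {u, w}" "u \<noteq> w"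
    by (meson card_2_iff)
  have "independent2 u w"
    unfolding independent2_def
  proof (intro allI impI)
    fix a b assume ab: "\<forall>i. a * u i + b * w i = 0"
    define c where "c v = (if v = u then a else b)" for v
    have "(\<Sum>v\<in>B. c v * v i) = a * u i + b * w i" for i
      using uw by (simp add: c_def)
    then have "(\<lambda>i. \<Sum>v\<in>B. c v * v i) = (\<lambda>i. 0)"
      using ab by simp
    then have "\<forall>v\<in>B. c v = 0"
      using B(2) unfolding kindep_def by blast
    then show "a = 0 \<and> b = 0"
      using uw unfolding c_def by auto
  qed
  then show ?thesis
    using B(1) uw(1) by blast
qed

lemma independent2_nonzero_minor:
  assumes "independent2 x y"
  shows "\<exists>i j. x i * y j - x j * y i \<noteq> 0"
proof (rule ccontr)
  assume "\<nexists>i j. x i * y j - x j * y i \<noteq> 0"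
  then have minors: "x i * y j = x j * y i" for i j
    by simp
  show False
  proof (cases "y = 0")
    case True
    then have "\<forall>i. 0 * x i + 1 * y i = 0"
      by simp
    with assms show False
      unfolding independent2_def by (metis one_neq_zero)
  next
    case False
    then obtain k where "y k \<noteq> 0"
      by (auto simp: fun_eq_iff)
    moreover have "\<forall>i. y k * x i + (- x k) * y i = 0"
      using minors by (simp add: mult.commute)
    ultimately show False
      using assms unfolding independent2_def by blast
  qed
qed

lemma collinear_coeff_eq:
  fixes xi xj yi yj zi zj c l :: "'a::field"
  assumes "xi * yj - xj * yi \<noteq> 0" "xi + c * yi = l * zi" "xj + c * yj = l * zj"
  shows "zj * yi - zi * yj \<noteq> 0 \<and> c = (zi * xj - zj * xi) / (zj * yi - zi * yj)"
proof -
  have c_eq: "c * (zj * yi - zi * yj) = zi * xj - zj * xi"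
  proof -
    have "c * (zj * yi - zi * yj) - (zi * xj - zj * xi) = zj * (xi + c * yi) - zi * (xj + c * yj)"
      by (simp add: algebra_simps)
    also have "\<dots> = 0"
      unfolding assms(2,3) by (simp add: algebra_simps)
    finally show ?thesis by simp
  qed
  have "zj * yi - zi * yj \<noteq> 0"
  proof
    assume den: "zj * yi - zi * yj = 0"
    then have num: "zi * xj - zj * xi = 0"
      using c_eq by simp
    have "(xi * yj - xj * yi) * zi = xi * (- (zj * yi - zi * yj)) - yi * (zi * xj - zj * xi)"
      "(xi * yj - xj * yi) * zj = xj * (- (zj * yi - zi * yj)) - yj * (zi * xj - zj * xi)"
      by (simp_all add: algebra_simps)
    then have "zi = 0" "zj = 0"
      using den num assms(1) by simp_all
    then have "xi = - c * yi" "xj = - c * yj"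
      using assms(2,3) by (simp_all add: eq_neg_iff_add_eq_0)
    then show False
      using assms(1) by simp
  qed
  then show ?thesis
    using c_eq by (simp add: field_simps)
qed

lemma coeff_in_subfield_if_collinear:
  assumes "subfield K" "x \<in> Kvec K" "y \<in> Kvec K" "z \<in> Kvec K" "independent2 x y"
    and "(\<lambda>i. x i + c * y i) = (\<lambda>i. l * z i)"
  shows "c \<in> K"
proof -
  obtain i j where "x i * y j - x j * y i \<noteq> 0"
    using independent2_nonzero_minor[OF assms(5)] by blast
  moreover have "x i + c * y i = l * z i" "x j + c * y j = l * z j"
    using assms(6) by (simp_all add: fun_eq_iff)
  ultimately have "c = (z i * x j - z j * x i) / (z j * y i - z i * y j)"
    using collinear_coeff_eq by blast
  moreover have "x i \<in> K" "x j \<in> K" "y i \<in> K" "y j \<in> K" "z i \<in> K" "z j \<in> K"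
    using assms(2-4) unfolding Kvec_def by auto
  ultimately show ?thesis
    by (simp add: subfield_divide[OF assms(1)] subfield_diff[OF assms(1)] subfield_mult[OF assms(1)])
qed

lemma line_avoids_kspace_one:
  assumes "independent2 u w" "kspace UNIV 1 P"
  shows "\<exists>c0. \<forall>c. c \<noteq> c0 \<longrightarrow> (\<lambda>i. u i + c * w i) \<notin> P"
proof (cases "\<exists>c0. (\<lambda>i. u i + c0 * w i) \<in> P")
  case True
  then obtain c0 where c0: "(\<lambda>i. u i + c0 * w i) \<in> P"
    by blast
  obtain b where P: "P = kpoint UNIV b"
    using kspace_one_eq_kpoint[OF subfield_UNIV assms(2)] by blast
  have "c = c0" if "(\<lambda>i. u i + c * w i) \<in> P" for c
    using independent2_line_kpoint_inj[OF assms(1)] kpoint_eq_if_mem[OF subfield_UNIV]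
      independent2_line_nonzero[OF assms(1)] that c0 unfolding P by metis
  then show ?thesis
    by blast
qed blast

lemma card_UNIV_le_if_line_almost_rational:
  fixes x y :: "'n \<Rightarrow> 'a::{field,finite}"
  assumes "subfield K" "x \<in> Kvec K" "y \<in> Kvec K" "independent2 x y"
    and "\<And>c. c \<noteq> d \<Longrightarrow> \<exists>z. z \<in> Kvec K \<and> kpoint UNIV (\<lambda>i. x i + c * y i) = kpoint UNIV z"
  shows "card (UNIV :: 'a set) \<le> card K + 1"
proof -
  have "UNIV - {d} \<subseteq> K"
  proof
    fix c assume "c \<in> UNIV - {d}"
    then obtain z where "z \<in> Kvec K" "kpoint UNIV (\<lambda>i. x i + c * y i) = kpoint UNIV z"
      using assms(5) by blast
    moreover from this have "(\<lambda>i. x i + c * y i) \<in> kpoint UNIV z"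
      using kpoint_self[OF subfield_UNIV] by blast
    then obtain l where "(\<lambda>i. x i + c * y i) = (\<lambda>i. l * z i)"
      unfolding kpoint_def by blast
    ultimately show "c \<in> K"
      using coeff_in_subfield_if_collinear[OF assms(1-3) _ assms(4)] by blast
  qed
  then show ?thesis
    using card_mono[of K "UNIV - {d}"] by simp
qed

lemma card_UNIV_le_if_line_of_lifted_points:
  fixes L P :: "('n \<Rightarrow> 'a::{field,finite}) set"
  assumes "subfield K" "kspace UNIV 2 L" "kspace UNIV 1 P"
    and lifted: "\<And>v. v \<in> L \<Longrightarrow> v \<notin> P \<Longrightarrow> \<exists>z. z \<in> Kvec K \<and> z \<noteq> 0 \<and> kpoint UNIV v = kpoint UNIV z"
  shows "card (UNIV :: 'a set) \<le> card K + 1"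
proof (rule ccontr)
  assume big: "\<not> ?thesis"
  have L: "ksubspace UNIV L"
    using assms(2) unfolding kspace_def by blast
  have line: "\<exists>c0. \<forall>c. c \<noteq> c0 \<longrightarrow>
      (\<exists>z. z \<in> Kvec K \<and> z \<noteq> 0 \<and> kpoint UNIV (\<lambda>i. x i + c * y i) = kpoint UNIV z)"
    if xy: "x \<in> L" "y \<in> L" "independent2 x y" for x y
  proof -
    obtain c0 where "\<forall>c. c \<noteq> c0 \<longrightarrow> (\<lambda>i. x i + c * y i) \<notin> P"
      using line_avoids_kspace_one[OF xy(3) assms(3)] by blast
    then show ?thesis
      using lifted ksubspace_line[OF L xy(1,2) UNIV_I] by blast
  qed
  obtain u w where uw: "u \<in> L" "w \<in> L" "independent2 u w"
    using kspace_two_independent2[OF assms(2)] by blast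
  obtain c0 where c0: "\<forall>c. c \<noteq> c0 \<longrightarrow>
      (\<exists>z. z \<in> Kvec K \<and> z \<noteq> 0 \<and> kpoint UNIV (\<lambda>i. u i + c * w i) = kpoint UNIV z)"
    using line[OF uw] by blast
  have "\<exists>c. c \<notin> {c0, c'}" for c'
  proof -
    have "card {c0, c'} < card (UNIV :: 'a set)"
      using big subfield_card_ge_2[OF assms(1)] card_insert_if[of "{c'}" c0] by simp
    then show ?thesis
      by (metis UNIV_eq_I nat_less_le)
  qed
  then obtain c1 c2 where "c1 \<notin> {c0, c0}" "c2 \<notin> {c0, c1}"
    by meson
  then have "c1 \<noteq> c0" "c2 \<noteq> c0" "c1 \<noteq> c2"
    by auto
  obtain x where x: "x \<in> Kvec K" "x \<noteq> 0" "kpoint UNIV (\<lambda>i. u i + c1 * w i) = kpoint UNIV x"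
    using c0[rule_format, OF \<open>c1 \<noteq> c0\<close>] by blast
  obtain y where y: "y \<in> Kvec K" "y \<noteq> 0" "kpoint UNIV (\<lambda>i. u i + c2 * w i) = kpoint UNIV y"
    using c0[rule_format, OF \<open>c2 \<noteq> c0\<close>] by blast
  have in_L: "z \<in> L" if "kpoint UNIV (\<lambda>i. u i + c * w i) = kpoint UNIV z" for c z
    using that ksubspace_line[OF L uw(1,2)] kpoint_subset_iff[OF subfield_UNIV L] by (metis UNIV_I)
  have "independent2 x y"
    using independent2_if_kpoint_neq[OF x(2) y(2)] independent2_line_kpoint_inj[OF uw(3)]
      x(3) y(3) \<open>c1 \<noteq> c2\<close> by metis
  then obtain d where d: "\<forall>c. c \<noteq> d \<longrightarrow>
      (\<exists>z. z \<in> Kvec K \<and> z \<noteq> 0 \<and> kpoint UNIV (\<lambda>i. x i + c * y i) = kpoint UNIV z)"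
    using line[OF in_L[OF x(3)] in_L[OF y(3)]] by blast
  have "card (UNIV :: 'a set) \<le> card K + 1"
    by (rule card_UNIV_le_if_line_almost_rational[OF assms(1) x(1) y(1) \<open>independent2 x y\<close>])
      (use d in blast)
  with big show False ..
qed

lemma not_is_cylinder_lift:
  fixes T :: "('n::finite \<Rightarrow> 'a::{field,finite}) set set"
  assumes "subfield K" "card K + 1 < card (UNIV :: 'a set)" "T \<subseteq> kpoints K"
  shows "\<not> is_cylinder UNIV 1 (mset_set (lift_point ` T))"
proof
  let ?Q = "card (UNIV :: 'a set)"
  assume "is_cylinder UNIV 1 (mset_set (lift_point ` T))"
  then obtain P L where P: "kspace UNIV 1 P"
    and L: "\<forall>i<?Q. kspace UNIV (1 + 1) (L i) \<and> P \<subseteq> L i"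
    and T_eq: "mset_set (lift_point ` T) = (\<Sum>i<?Q. mset_set {Q \<in> kpoints UNIV. Q \<subseteq> L i \<and> \<not> Q \<subseteq> P})"
    unfolding is_cylinder_def by blast
  have "0 < ?Q"
    using assms(2) by simp
  then have L0: "kspace UNIV 2 (L 0)"
    using L by (simp add: numeral_2_eq_2)
  have "\<exists>z. z \<in> Kvec K \<and> z \<noteq> 0 \<and> kpoint UNIV v = kpoint UNIV z" if v: "v \<in> L 0" "v \<notin> P" for v
  proof -
    have ks: "ksubspace UNIV (L 0)" "ksubspace UNIV P"
      using L0 P unfolding kspace_def by blast+
    then have "v \<noteq> 0" "kpoint UNIV v \<subseteq> L 0" "\<not> kpoint UNIV v \<subseteq> P"
      using v ksubspace_zero[OF ks(2)] kpoint_subset_iff[OF subfield_UNIV ks(1)]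
        kpoint_subset_iff[OF subfield_UNIV ks(2)] by auto
    then have "kpoint UNIV v \<in> {Q \<in> kpoints UNIV. Q \<subseteq> L 0 \<and> \<not> Q \<subseteq> P}"
      unfolding kpoints_iff Kvec_UNIV by blast
    then have "kpoint UNIV v \<in> set_mset (mset_set (lift_point ` T))"
      unfolding T_eq using \<open>0 < ?Q\<close> by (auto simp: set_mset_sum)
    then obtain P' where "P' \<in> T" "kpoint UNIV v = lift_point P'"
      by auto
    moreover obtain z where "z \<in> Kvec K" "z \<noteq> 0" "lift_point P' = kpoint UNIV z"
      using lift_point_kpoints[OF assms(1)] \<open>P' \<in> T\<close> assms(3) by blast
    ultimately show ?thesis
      by auto
  qed
  then have "?Q \<le> card K + 1"
    by (rule card_UNIV_le_if_line_of_lifted_points[OF assms(1) L0 P])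
  with assms(2) show False
    by simp
qed

section \<open>Divisibility of lifted cylinders\<close>

lemma card_mult_le_card_Int:
  fixes A B C :: "'a::ab_group_add set"
  assumes "finite A" "finite B" "finite C" "additive_subgroup A" "additive_subgroup B" "A + B \<subseteq> C"
  shows "card A * card B \<le> card C * card (A \<inter> B)"
  using card_set_plus_Int[OF assms(1,2,4,5)] card_mono[OF assms(3,6)] by simp

lemma pow_eq_or_Suc_if_between:
  fixes q :: nat
  assumes "1 < q" "q ^ b \<le> q ^ c" "q ^ c \<le> q * q ^ b"
  shows "q ^ c = q ^ b \<or> q ^ c = q * q ^ b"
proof -
  have "b \<le> c"
    using assms(1,2) by (rule power_le_imp_le_exp)
  moreover have "c \<le> Suc b"
    using assms(3) by (simp add: power_le_imp_le_exp[OF assms(1)])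
  ultimately have "c = b \<or> c = Suc b"
    by linarith
  then show ?thesis
    by auto
qed

lemma disjoint_if_count_sum_mset_set_le_1:
  assumes "finite I" "\<forall>x. count (\<Sum>i\<in>I. mset_set (A i)) x \<le> 1"
    and "i \<in> I" "j \<in> I" "i \<noteq> j" "finite (A i)" "finite (A j)"
  shows "A i \<inter> A j = {}"
proof (rule ccontr)
  assume "A i \<inter> A j \<noteq> {}"
  then obtain x where "x \<in> A i" "x \<in> A j"
    by blast
  then have "2 = (\<Sum>k\<in>{i, j}. count (mset_set (A k)) x)"
    using assms(5-7) by simp
  also have "\<dots> \<le> (\<Sum>k\<in>I. count (mset_set (A k)) x)"
    using assms(1,3,4) by (intro sum_mono2) auto
  also have "\<dots> \<le> 1"
    using assms(2) by (simp add: count_sum)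
  finally show False
    by simp
qed

lemma pg_divisible_if_dvd:
  fixes S :: "('n::finite \<Rightarrow> 'a::field) set set"
  assumes "card K ^ e dvd card S"
    and "\<And>H. kspace K (card (UNIV :: 'n set) - 1) H \<Longrightarrow> card K ^ e dvd card {P \<in> S. P \<subseteq> H}"
  shows "pg_divisible K e S"
  using assms unfolding pg_divisible_def by (simp add: dvd_imp_mod_0)

lemma add_one_less_power:
  fixes q :: nat
  assumes "2 \<le> q" "2 \<le> h"
  shows "q + 1 < q ^ h"
proof -
  have "q + 1 < 2 * q"
    using assms(1) by simp
  also have "\<dots> \<le> q * q"
    using assms(1) by (rule mult_le_mono1)
  also have "\<dots> \<le> q ^ h"
    using assms power_increasing[of 2 h q] by (simp add: power2_eq_square)
  finally show ?thesis .
qed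

locale projective_cylinder =
  fixes K :: "'a::{field,finite} set" and r :: nat
    and F :: "('n::finite \<Rightarrow> 'a) set" and L :: "nat \<Rightarrow> ('n \<Rightarrow> 'a) set"
  assumes subfield: "subfield K"
    and F_space: "kspace K r F"
    and L_space: "i < card K \<Longrightarrow> kspace K (Suc r) (L i)"
    and F_subset_L: "i < card K \<Longrightarrow> F \<subseteq> L i"
    and disjoint: "i < card K \<Longrightarrow> j < card K \<Longrightarrow> i \<noteq> j \<Longrightarrow>
      {P \<in> kpoints K. P \<subseteq> L i \<and> \<not> P \<subseteq> F} \<inter> {P \<in> kpoints K. P \<subseteq> L j \<and> \<not> P \<subseteq> F} = {}"
begin

definition part :: "nat \<Rightarrow> ('n \<Rightarrow> 'a) set set" where
  "part i = {P \<in> kpoints K. P \<subseteq> L i \<and> \<not> P \<subseteq> F}"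

lemma card_K_ge_2: "2 \<le> card K"
  using subfield_card_ge_2[OF subfield] by simp

lemma ksubspace_F: "ksubspace K F"
  using F_space unfolding kspace_def by blast

lemma ksubspace_L: "i < card K \<Longrightarrow> ksubspace K (L i)"
  using L_space unfolding kspace_def by blast

lemma card_F: "card F = card K ^ r"
  using card_kspace[OF subfield F_space] .

lemma card_L: "i < card K \<Longrightarrow> card (L i) = card K * card K ^ r"
  using card_kspace[OF subfield L_space] by simp

lemma card_points_in_subspace:
  assumes "ksubspace UNIV H"
  shows "card {P \<in> (\<Union>i<card K. part i). P \<subseteq> H} = (\<Sum>i<card K. card {P \<in> part i. P \<subseteq> H})"
proof -
  have "{P \<in> (\<Union>i<card K. part i). P \<subseteq> H} = (\<Union>i<card K. {P \<in> part i. P \<subseteq> H})"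
    by blast
  then show ?thesis
    using disjoint unfolding part_def by (simp add: card_UN_disjoint disjoint_iff)
qed

lemma card_part: "i < card K \<Longrightarrow> card (part i) = card K ^ r"
proof -
  assume "i < card K"
  then have "(card K - 1) * card (part i) = card (L i) - card F"
    unfolding part_def using ksubspace_F ksubspace_L F_subset_L
    by (intro card_kpoints_between[OF subfield]) simp_all
  also have "\<dots> = (card K - 1) * card K ^ r"
    using card_L[OF \<open>i < card K\<close>] card_F by (simp add: diff_mult_distrib)
  finally show ?thesis
    using card_K_ge_2 by simp
qed

lemma card_parts: "card (\<Union>i<card K. part i) = card K ^ Suc r"
proof -
  have "card (\<Union>i<card K. part i) = (\<Sum>i<card K. card (part i))"
    using disjoint unfolding part_def by (simp add: card_UN_disjoint disjoint_iff)
  then show ?thesis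
    using card_part by simp
qed

end

locale cylinder_hyperplane = projective_cylinder K r F L
  for K :: "'a::{field,finite} set" and r F and L :: "nat \<Rightarrow> ('n::finite \<Rightarrow> 'a) set" +
  fixes h :: nat and H :: "('n \<Rightarrow> 'a) set"
  assumes card_UNIV: "card (UNIV :: 'a set) = card K ^ h"
    and hyperplane: "kspace UNIV (card (UNIV :: 'n set) - 1) H"
begin

lemma ksubspace_H: "ksubspace UNIV H"
  using hyperplane unfolding kspace_def by blast

lemma card_le_card_Int_H: "ksubspace K A \<Longrightarrow> card A \<le> card K ^ h * card (A \<inter> H)"
  using card_le_card_Int_hyperplane[OF additive_subgroup_ksubspace[OF _ subfield] hyperplane] card_UNIV
  by simp

definition "F_H_size = card (F \<inter> H)"
definition "L_H_size i = card (L i \<inter> H)"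

lemma F_H_size_power: "\<exists>b. F_H_size = card K ^ b \<and> r \<le> h + b"
proof -
  obtain b where b: "F_H_size = card K ^ b"
    unfolding F_H_size_def
    using ksubspace_card_power[OF subfield _ _ ksubspace_Int_ksubspace_UNIV[OF ksubspace_F ksubspace_H]]
    by auto
  then have "card K ^ r \<le> card K ^ (h + b)"
    using card_le_card_Int_H[OF ksubspace_F] card_F unfolding F_H_size_def by (simp add: power_add)
  then show ?thesis
    using b card_K_ge_2 by simp
qed

lemma L_H_size_cases:
  assumes "i < card K"
  shows "L_H_size i = F_H_size \<or> L_H_size i = card K * F_H_size"
proof -
  have ks: "ksubspace K (F \<inter> H)" "ksubspace K (L i \<inter> H)"
    using ksubspace_Int_ksubspace_UNIV ksubspace_F ksubspace_L[OF assms] ksubspace_H by blast+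
  obtain b c where "F_H_size = card K ^ b" "L_H_size i = card K ^ c"
    unfolding F_H_size_def L_H_size_def using ksubspace_card_power[OF subfield] ks by (meson finite)
  moreover have "F_H_size \<le> L_H_size i"
    unfolding F_H_size_def L_H_size_def using F_subset_L[OF assms] by (intro card_mono) auto
  moreover have "L_H_size i * card F \<le> (card K * F_H_size) * card F"
  proof -
    have "(L i \<inter> H) + F \<subseteq> L i"
      using ksubspace_add[OF ksubspace_L[OF assms]] F_subset_L[OF assms] by (auto elim!: set_plus_elim)
    then have "L_H_size i * card F \<le> card (L i) * card ((L i \<inter> H) \<inter> F)"
      unfolding L_H_size_def using additive_subgroup_ksubspace subfield ks(2) ksubspace_F
      by (intro card_mult_le_card_Int) auto
    also have "(L i \<inter> H) \<inter> F = F \<inter> H"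
      using F_subset_L[OF assms] by blast
    finally show ?thesis
      unfolding F_H_size_def card_F card_L[OF assms] by (simp add: ac_simps)
  qed
  then have "L_H_size i \<le> card K * F_H_size"
    using card_F card_K_ge_2 by simp
  ultimately show ?thesis
    using pow_eq_or_Suc_if_between[of "card K" b c] card_K_ge_2 by simp
qed

lemma card_part_in_H:
  assumes "i < card K"
  shows "card {P \<in> part i. P \<subseteq> H} = (if L_H_size i = F_H_size then 0 else F_H_size)"
proof -
  have "{P \<in> part i. P \<subseteq> H} = {P \<in> kpoints K. P \<subseteq> L i \<inter> H \<and> \<not> P \<subseteq> F \<inter> H}"
    unfolding part_def by blast
  moreover have "(card K - 1) * card {P \<in> kpoints K. P \<subseteq> L i \<inter> H \<and> \<not> P \<subseteq> F \<inter> H} = L_H_size i - F_H_size"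
    unfolding F_H_size_def L_H_size_def
    using F_subset_L[OF assms] ksubspace_Int_ksubspace_UNIV ksubspace_F ksubspace_L[OF assms] ksubspace_H
    by (intro card_kpoints_between[OF subfield]) auto
  ultimately have points: "(card K - 1) * card {P \<in> part i. P \<subseteq> H} = L_H_size i - F_H_size"
    by simp
  show ?thesis
  proof (cases "L_H_size i = F_H_size")
    case True
    then show ?thesis
      using points card_K_ge_2 by simp
  next
    case False
    then have "(card K - 1) * card {P \<in> part i. P \<subseteq> H} = (card K - 1) * F_H_size"
      using points L_H_size_cases[OF assms] by (simp add: diff_mult_distrib)
    then show ?thesis
      using False card_K_ge_2 by simp
  qed
qed

lemma power_Suc_le_if_L_H_size_eq:
  assumes "i < card K" "L_H_size i = F_H_size"
  shows "card K ^ Suc r \<le> card K ^ h * F_H_size"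
  using card_le_card_Int_H[OF ksubspace_L[OF assms(1)]] card_L[OF assms(1)] assms(2)
  unfolding L_H_size_def by simp

lemma dvd_card_points_in_H:
  "card K ^ (Suc r - h) dvd card {P \<in> (\<Union>i<card K. part i). P \<subseteq> H}"
proof -
  obtain b where b: "F_H_size = card K ^ b" "r \<le> h + b"
    using F_H_size_power by blast
  have "card K ^ (Suc r - h) dvd (\<Sum>i<card K. card {P \<in> part i. P \<subseteq> H})"
  proof (cases "\<exists>i<card K. L_H_size i = F_H_size")
    case True
    then obtain i where "i < card K" "L_H_size i = F_H_size"
      by blast
    then have "card K ^ Suc r \<le> card K ^ (h + b)"
      using power_Suc_le_if_L_H_size_eq b(1) by (simp add: power_add)
    then have "Suc r \<le> h + b"
      using card_K_ge_2 by (subst (asm) power_increasing_iff) auto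
    then have "Suc r - h \<le> b"
      by simp
    then have "card K ^ (Suc r - h) dvd F_H_size"
      unfolding b(1) by (rule le_imp_power_dvd)
    then show ?thesis
      using card_part_in_H by (intro dvd_sum) simp
  next
    case False
    then have "(\<Sum>i<card K. card {P \<in> part i. P \<subseteq> H}) = card K ^ Suc b"
      using card_part_in_H b(1) by simp
    moreover have "Suc r - h \<le> Suc b"
      using b(2) by simp
    ultimately show ?thesis
      by (metis le_imp_power_dvd)
  qed
  then show ?thesis
    unfolding card_points_in_subspace[OF ksubspace_H] .
qed

end

lemma projective_cylinder_of_is_cylinder:
  fixes M :: "('n::finite \<Rightarrow> 'a::{field,finite}) set multiset"
  assumes "subfield K" "is_cylinder K r M" "\<forall>P. count M P \<le> 1"
  obtains F L where "projective_cylinder K r F L"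
    and "M = (\<Sum>i<card K. mset_set {P \<in> kpoints K. P \<subseteq> L i \<and> \<not> P \<subseteq> F})"
proof -
  obtain F L where "kspace K r F"
    and L: "\<forall>i<card K. kspace K (Suc r) (L i) \<and> F \<subseteq> L i"
    and M: "M = (\<Sum>i<card K. mset_set {P \<in> kpoints K. P \<subseteq> L i \<and> \<not> P \<subseteq> F})"
    using assms(2) unfolding is_cylinder_def by auto
  moreover have "projective_cylinder K r F L"
    using assms(1) \<open>kspace K r F\<close> L
      disjoint_if_count_sum_mset_set_le_1[of "{..<card K}", OF _ assms(3)[unfolded M]]
    by unfold_locales simp_all
  ultimately show ?thesis
    using that by blast
qed

lemma (in projective_cylinder) dvd_card_lifted_points_in_hyperplane:
  fixes H :: "('n \<Rightarrow> 'a) set"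
  assumes "card (UNIV :: 'a set) = card K ^ h" "kspace UNIV (card (UNIV :: 'n set) - 1) H"
  shows "card K ^ (Suc r - h) dvd card {Q \<in> lift_point ` (\<Union>i<card K. part i). Q \<subseteq> H}"
proof -
  interpret cylinder_hyperplane K r F L h H
    using assms by unfold_locales
  have "(\<Union>i<card K. part i) \<subseteq> kpoints K"
    unfolding part_def by blast
  then show ?thesis
    using dvd_card_points_in_H card_lifted_points_in_subspace[OF subfield _ ksubspace_H] by simp
qed

lemma (in projective_cylinder) pg_divisible_lift:
  assumes "card (UNIV :: 'a set) = card K ^ h" "2 * h \<le> Suc r"
  shows "pg_divisible UNIV 1 (lift_point ` (\<Union>i<card K. part i))"
proof (rule pg_divisible_if_dvd)
  have "(\<Union>i<card K. part i) \<subseteq> kpoints K"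
    unfolding part_def by blast
  then show "card (UNIV :: 'a set) ^ 1 dvd card (lift_point ` (\<Union>i<card K. part i))"
    unfolding card_lift_image[OF subfield \<open>(\<Union>i<card K. part i) \<subseteq> kpoints K\<close>] card_parts assms(1)
    using assms(2) by (simp add: le_imp_power_dvd)
next
  fix H :: "('n \<Rightarrow> 'a) set"
  assume "kspace UNIV (card (UNIV :: 'n set) - 1) H"
  then have "card K ^ (Suc r - h) dvd card {Q \<in> lift_point ` (\<Union>i<card K. part i). Q \<subseteq> H}"
    by (rule dvd_card_lifted_points_in_hyperplane[OF assms(1)])
  moreover have "card K ^ h dvd card K ^ (Suc r - h)"
    using assms(2) by (simp add: le_imp_power_dvd)
  ultimately show "card (UNIV :: 'a set) ^ 1 dvd card {Q \<in> lift_point ` (\<Union>i<card K. part i). Q \<subseteq> H}"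
    unfolding assms(1) power_one_right by (rule dvd_trans[rotated])
qed

theorem mainTheorem12:
  fixes K :: "'a::{field,finite} set" and M :: "('n::finite \<Rightarrow> 'a) set multiset"
    and q h :: nat and S :: "('n \<Rightarrow> 'a) set set"
  assumes "\<exists>p k. prime p \<and> k \<ge> 1 \<and> q = p ^ k"
    and "h \<ge> 2"
    and "subfield K" and "card K = q" and "card (UNIV :: 'a set) = q ^ h"
    and "is_cylinder K (2 * h - 1) M"
    and "\<forall>P. count M P \<le> 1"
    and "spanning K (set_mset M)"
  defines "S \<equiv> {kpoint UNIV x | x. x \<in> Kvec K \<and> x \<noteq> (\<lambda>i. 0) \<and> kpoint K x \<in> set_mset M}"
  shows "S \<subseteq> kpoints UNIV \<and> spanning UNIV S \<and> card S = (q ^ h) ^ 2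
    \<and> pg_divisible UNIV 1 S \<and> \<not> is_cylinder UNIV 1 (mset_set S)"
proof -
  obtain F L where cylinder: "projective_cylinder K (2 * h - 1) F L"
    and M_eq: "M = (\<Sum>i<card K. mset_set {P \<in> kpoints K. P \<subseteq> L i \<and> \<not> P \<subseteq> F})"
    using projective_cylinder_of_is_cylinder[OF assms(3,6,7)] .
  interpret projective_cylinder K "2 * h - 1" F L
    by (rule cylinder)
  have M_parts: "set_mset M = (\<Union>i<card K. part i)"
    unfolding M_eq part_def by (simp add: set_mset_sum)
  then have M_points: "set_mset M \<subseteq> kpoints K"
    unfolding part_def by blast
  have S_eq: "S = lift_point ` (\<Union>i<card K. part i)"
    unfolding S_def M_parts[symmetric] by (rule lifted_points_eq_image[OF assms(3) M_points])
  have q: "2 \<le> q" "Suc (2 * h - 1) = 2 * h"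
    using subfield_card_ge_2[OF assms(3)] assms(2,4) by simp_all
  have "S \<subseteq> kpoints UNIV"
    unfolding S_def kpoints_def Kvec_UNIV by blast
  moreover have "spanning UNIV S"
    unfolding S_eq M_parts[symmetric] using assms(3) M_points assms(8) by (rule spanning_lift)
  moreover have "card S = (q ^ h) ^ 2"
    unfolding S_eq card_lift_image[OF assms(3) M_points[unfolded M_parts]] card_parts
    using q assms(4) by (simp add: power_mult[symmetric] mult.commute)
  moreover have "pg_divisible UNIV 1 S"
    unfolding S_eq using pg_divisible_lift q assms(4,5) by simp
  moreover have "\<not> is_cylinder UNIV 1 (mset_set S)"
    unfolding S_eq using not_is_cylinder_lift[OF assms(3)] add_one_less_power q assms(2,4,5) M_points M_parts
    by simp
  ultimately show ?thesis
    by blast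
qed

end
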